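(* Let $G$ be an abelian group of order $9p^{4s}$, where $p\ge 5$ is a prime and $s$ is a positive integer. Then there does not exist a $(9p^{4s},\ r(3p^{2s}+1),\ -3p^{2s}+r^2+3r,\ r^2+r)$-partial difference set in $G$ with $r=(3p^{2s}-5)/2$.
   Context: For a finite abelian group $G$ of order $v$, a subset $D\subseteq G$ of size $k$ is a $(v,k,\lambda,\mu)$-partial difference set (PDS) if the expressions $gh^{-1}$ with $g,h\in D$, $g\ne h$, represent each non-identity element of $D$ exactly $\lambda$ times and each non-identity element of $G\setminus D$ exactly $\mu$ times. *)

theory Defs
  imports "HOL-Algebra.Algebra" "HOL-Computational_Algebra.Primes"
begin

text \<open>Parameters are integers (lambda is given by an integer
  expression in the paper).\<close>

definition is_pds :: "('a, 'b) monoid_scheme \<Rightarrow> 'a set \<Rightarrow> int \<Rightarrow> int \<Rightarrow> int \<Rightarrow> int \<Rightarrow> bool" where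
  "is_pds G D v k lam mu \<longleftrightarrow>
     D \<subseteq> carrier G \<and> int (card (carrier G)) = v \<and> int (card D) = k \<and>
     (\<forall>x \<in> carrier G - {\<one>\<^bsub>G\<^esub>}.
        int (card {(g, h). g \<in> D \<and> h \<in> D \<and> g \<noteq> h \<and> g \<otimes>\<^bsub>G\<^esub> inv\<^bsub>G\<^esub> h = x})
          = (if x \<in> D then lam else mu))"

end

theory Submission
  imports Defs "HOL-Number_Theory.Number_Theory"
begin

text \<open>
  Put \<open>p\<^sup>2\<^sup>s = 2u + 1\<close>, so \<open>|G| = 9(2u + 1)\<^sup>2\<close> and \<open>r = 3u - 1\<close>. Such a PDS \<open>D\<close> is regular,
  and its eigenvalues \<open>\<theta> = 3u - 1\<close>, \<open>\<tau> = -3u - 4\<close> are integers with \<open>(\<theta> - \<tau>)\<^sup>2 = |G|\<close>, so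
  every \<open>t\<close> prime to \<open>|G|\<close> is a multiplier: \<open>x \<in> D \<longleftrightarrow> x\<^sup>t \<in> D\<close>.
  Split \<open>G = K \<times> H\<close> into its \<open>3\<close>-part \<open>K\<close> of order \<open>9\<close> and its \<open>p\<close>-part \<open>H\<close>, and for \<open>g \<in> H\<close> let
  \<open>E(g) = |D \<inter> gK| \<le> 9\<close>. Counting triples in \<open>D\<close> modulo \<open>3\<close> gives \<open>E(g) \<equiv> 2[g = 1] (mod 3)\<close>,
  and the multiplier \<open>t \<equiv> -1 (mod 9)\<close>, \<open>t \<equiv> 1 (mod |H|)\<close> gives \<open>E(g) \<equiv> [g \<in> D] (mod 2)\<close>.
  Together with the first two moments of \<open>E\<close>, which the PDS equations determine, this leaves
  \<open>|D \<inter> K| \<in> {2, 8}\<close>. The value \<open>2\<close> would leave exactly two cosets with \<open>E(g) \<in> {0, 9}\<close>, but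
  these are closed under \<open>g \<mapsto> g\<^sup>2\<close> and \<open>g \<mapsto> g\<^sup>-\<^sup>1\<close>. So \<open>|D \<inter> K| = 8\<close> and \<open>E(g) \<in> {3, 6}\<close> for
  \<open>g \<noteq> 1\<close>, with \<open>E(g) = 3\<close> exactly when \<open>g \<in> D\<close>; this fixes \<open>|D \<inter> H| = 2(u + 1)(u + 2)\<close>, and
  then the Cauchy-Schwarz inequality for the numbers \<open>|D \<inter> hH|\<close>, \<open>h \<in> K - {1}\<close>, fails.
\<close>

section \<open>Fermat's little theorem, involutions and rotations of words\<close>

lemma fermat_little_nat:
  fixes a :: nat
  assumes "Factorial_Ring.prime q"
  shows "[a ^ q = a] (mod q)"
proof (cases "q dvd a")
  case True
  moreover have "a dvd a ^ q"
    using assms prime_gt_0_nat dvd_power by blast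
  ultimately have "[a ^ q = 0] (mod q)" "[a = 0] (mod q)"
    by (auto simp: cong_0_iff intro: dvd_trans)
  then show ?thesis
    by (metis cong_sym cong_trans)
next
  case False
  then have "[a ^ (q - 1) * a = 1 * a] (mod q)"
    using fermat_theorem[OF assms] cong_scalar_right by blast
  then show ?thesis
    using assms prime_gt_0_nat by (simp flip: power_Suc2)
qed

lemma fermat_little_int:
  fixes x :: int
  assumes "Factorial_Ring.prime q"
  shows "[x ^ q = x] (mod int q)"
proof -
  have x: "[x = int (nat (x mod int q))] (mod int q)"
    using assms prime_gt_0_nat by (simp add: cong_def)
  have "[int (nat (x mod int q)) ^ q = int (nat (x mod int q))] (mod int q)"
    using fermat_little_nat[OF assms] by (metis cong_int_iff of_nat_power)
  then show ?thesis
    using x cong_pow cong_sym cong_trans by metis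
qed

lemma even_card_plus_card_fixpoints:
  assumes fin: "finite A" and f: "\<And>a. a \<in> A \<Longrightarrow> f a \<in> A" "\<And>a. a \<in> A \<Longrightarrow> f (f a) = a"
  shows "even (card A + card {a\<in>A. f a = a})"
proof -
  define N where "N = {a\<in>A. f a \<noteq> a}"
  have "even (card (\<Union>((\<lambda>a. {a, f a}) ` N)))"
  proof (rule dvd_partition)
    show "finite (\<Union>((\<lambda>a. {a, f a}) ` N))"
      using fin f unfolding N_def by (auto intro: finite_subset)
    show "\<forall>c\<in>(\<lambda>a. {a, f a}) ` N. 2 dvd card c"
      unfolding N_def by auto
    show "\<forall>c1\<in>(\<lambda>a. {a, f a}) ` N. \<forall>c2\<in>(\<lambda>a. {a, f a}) ` N. c1 \<noteq> c2 \<longrightarrow> c1 \<inter> c2 = {}"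
      unfolding N_def using f(2) by auto metis+
  qed
  moreover have "\<Union>((\<lambda>a. {a, f a}) ` N) = N"
    unfolding N_def using f by auto
  moreover have "card A = card N + card {a\<in>A. f a = a}"
    unfolding N_def using fin by (subst card_Un_disjoint[symmetric]) (auto intro: arg_cong[where f = card])
  ultimately show ?thesis
    by simp
qed

lemma replicate_range_iff_card_set:
  assumes "length xs = n" "n > 0"
  shows "xs \<in> range (replicate n) \<longleftrightarrow> card (set xs) = 1"
proof
  assume "card (set xs) = 1"
  then obtain a where "set xs = {a}"
    using card_1_singletonE by blast
  then show "xs \<in> range (replicate n)"
    using replicate_length_same[of xs a] assms by auto
next
  assume "xs \<in> range (replicate n)"
  then obtain a where "xs = replicate n a"
    by blast
  then show "card (set xs) = 1"
    using assms by simp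
qed

lemma rotate_eq_self_prime_length:
  assumes q: "Factorial_Ring.prime (length xs)" and rot: "rotate d xs = xs" and nd: "\<not> length xs dvd d"
  shows "card (set xs) = 1"
proof -
  have rot_mult: "rotate (d * e) xs = xs" for e
  proof (induction e)
    case (Suc e)
    then show ?case
      using rot by (metis mult_Suc_right rotate_rotate)
  qed simp
  have "coprime d (length xs)"
    using prime_imp_coprime[OF q nd] by (simp add: coprime_commute)
  then obtain e where e: "[d * e = 1] (mod length xs)"
    using cong_solve_coprime_nat by (metis One_nat_def)
  have "(d * e) mod length xs = 1"
    using e prime_gt_1_nat[OF q] by (simp add: cong_def)
  then have "rotate1 xs = rotate (d * e) xs"
    by (metis One_nat_def rotate_Suc rotate0 rotate_conv_mod id_apply)
  then have "rotate1 xs = xs"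
    using rot_mult by simp
  moreover have "xs \<noteq> []"
    using q by auto
  ultimately show ?thesis
    using rotate1_fixpoint_card by blast
qed

lemma range_rotate_eq_image:
  assumes "xs \<noteq> []"
  shows "range (\<lambda>i. rotate i xs) = (\<lambda>i. rotate i xs) ` {..<length xs}"
proof -
  have "range (\<lambda>i. rotate i xs) = (\<lambda>i. rotate i xs) ` range (\<lambda>i. i mod length xs)"
    unfolding image_image by (metis rotate_conv_mod)
  also have "range (\<lambda>i. i mod length xs) = {..<length xs}"
    using range_mod[of "length xs"] assms by (simp add: atLeast0LessThan)
  finally show ?thesis .
qed

lemma range_rotate_rotate: "range (\<lambda>i. rotate i (rotate j xs)) = range (\<lambda>i. rotate i xs)"
proof (cases "xs = []")
  case False
  have "rotate i xs = rotate (i + (length xs - 1) * j) (rotate j xs)" for i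
  proof -
    have "i + (length xs - 1) * j + j = i + length xs * j"
      using False by (cases "length xs") auto
    then have "rotate (i + (length xs - 1) * j) (rotate j xs) = rotate (i + length xs * j) xs"
      by (simp add: rotate_rotate add.assoc)
    also have "\<dots> = rotate i xs"
      by (metis mod_mult_self2 rotate_conv_mod)
    finally show ?thesis ..
  qed
  then have "range (\<lambda>i. rotate i xs) \<subseteq> range (\<lambda>i. rotate i (rotate j xs))"
    by blast
  moreover have "range (\<lambda>i. rotate i (rotate j xs)) \<subseteq> range (\<lambda>i. rotate i xs)"
    by (auto simp: rotate_rotate)
  ultimately show ?thesis
    by blast
qed simp

lemma card_range_rotate:
  assumes q: "Factorial_Ring.prime (length xs)" and nc: "card (set xs) \<noteq> 1"
  shows "card (range (\<lambda>i. rotate i xs)) = length xs"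
proof -
  have le_eq: "i = j" if "i < length xs" "j < length xs" "i \<le> j" "rotate i xs = rotate j xs" for i j
  proof (rule ccontr)
    assume "i \<noteq> j"
    have "rotate (j - i) xs = rotate (j - i + length xs) xs"
      by (metis mod_add_self2 rotate_conv_mod)
    also have "\<dots> = rotate (length xs - i) (rotate j xs)"
      using that by (simp add: rotate_rotate add.commute)
    also have "\<dots> = rotate (length xs - i) (rotate i xs)"
      using that(4) by simp
    also have "\<dots> = xs"
      using that(1) by (simp add: rotate_rotate)
    finally show False
      using rotate_eq_self_prime_length[OF q, of "j - i"] nc that \<open>i \<noteq> j\<close>
      by (simp add: nat_dvd_not_less)
  qed
  have "inj_on (\<lambda>i. rotate i xs) {..<length xs}"
  proof (rule inj_onI)
    fix i j assume "i \<in> {..<length xs}" "j \<in> {..<length xs}" "rotate i xs = rotate j xs"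
    then show "i = j"
      using le_eq[of i j] le_eq[of j i] by (cases "i \<le> j") auto
  qed
  moreover have "xs \<noteq> []"
    using q by auto
  ultimately show ?thesis
    by (simp add: range_rotate_eq_image card_image)
qed

lemma prime_dvd_card_rotation_closed:
  assumes q: "Factorial_Ring.prime q" and fin: "finite S"
    and len: "\<And>xs. xs \<in> S \<Longrightarrow> length xs = q" and closed: "\<And>xs. xs \<in> S \<Longrightarrow> rotate1 xs \<in> S"
  shows "q dvd card (S - range (replicate q))"
proof -
  define S' where "S' = {xs\<in>S. card (set xs) \<noteq> 1}"
  have "rotate i xs \<in> S'" if "xs \<in> S'" for i xs
    using that by (induction i) (auto simp: S'_def closed rotate1_rotate_swap[symmetric])
  then have orbits: "S' = (\<Union>xs\<in>S'. range (\<lambda>i. rotate i xs))"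
    by (auto intro!: range_eqI[of _ _ 0])
  have "q dvd card (\<Union>xs\<in>S'. range (\<lambda>i. rotate i xs))"
  proof (rule dvd_partition)
    show "finite (\<Union>xs\<in>S'. range (\<lambda>i. rotate i xs))"
      using fin by (subst orbits[symmetric]) (simp add: S'_def)
    show "\<forall>c\<in>(\<lambda>xs. range (\<lambda>i. rotate i xs)) ` S'. q dvd card c"
      using q by (auto simp: S'_def len card_range_rotate)
    show "\<forall>c1\<in>(\<lambda>xs. range (\<lambda>i. rotate i xs)) ` S'. \<forall>c2\<in>(\<lambda>xs. range (\<lambda>i. rotate i xs)) ` S'.
        c1 \<noteq> c2 \<longrightarrow> c1 \<inter> c2 = {}"
    proof (intro ballI impI)
      fix c1 c2 assume c: "c1 \<in> (\<lambda>xs. range (\<lambda>i. rotate i xs)) ` S'" "c2 \<in> (\<lambda>xs. range (\<lambda>i. rotate i xs)) ` S'" "c1 \<noteq> c2"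
      then obtain xs ys where xs: "c1 = range (\<lambda>i. rotate i xs)" and ys: "c2 = range (\<lambda>i. rotate i ys)"
        by blast
      show "c1 \<inter> c2 = {}"
      proof (rule ccontr)
        assume "c1 \<inter> c2 \<noteq> {}"
        then obtain i j where "rotate i xs = rotate j ys"
          unfolding xs ys by blast
        then have "c1 = c2"
          unfolding xs ys by (metis range_rotate_rotate)
        then show False
          using c(3) by contradiction
      qed
    qed
  qed
  then have "q dvd card S'"
    by (subst orbits)
  moreover have "S - range (replicate q) = S'"
    unfolding S'_def using len replicate_range_iff_card_set[OF _ prime_gt_0_nat[OF q]] by auto
  ultimately show ?thesis
    by simp
qed

lemma square_sum_le_card_sum_squares:
  fixes x :: "'i \<Rightarrow> 'a::linordered_idom"
  shows "(\<Sum>i\<in>I. x i) ^ 2 \<le> of_nat (card I) * (\<Sum>i\<in>I. x i ^ 2)"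
proof -
  have "0 \<le> (\<Sum>i\<in>I. \<Sum>j\<in>I. (x i - x j) ^ 2)"
    by (intro sum_nonneg) simp
  also have "\<dots> = 2 * (of_nat (card I) * (\<Sum>i\<in>I. x i ^ 2)) - 2 * (\<Sum>i\<in>I. x i) ^ 2"
    by (simp add: power2_diff sum.distrib sum_subtractf sum_distrib_left sum_distrib_right
        sum_product power2_eq_square algebra_simps)
  finally show ?thesis
    by simp
qed

section \<open>Power maps and coprime splittings of finite abelian groups\<close>

lemma (in group) pow_eq_one_coprime:
  fixes m n :: nat
  assumes "x \<in> carrier G" "x [^] m = \<one>" "x [^] n = \<one>" "coprime m n"
  shows "x = \<one>"
proof -
  have "ord x dvd m" "ord x dvd n"
    using assms pow_eq_id by auto
  then have "ord x = 1"
    using assms(4) coprime_common_divisor_nat by blast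
  then show ?thesis
    using assms(1) ord_eq_1 by blast
qed

lemma (in group) mult_inv_eq_one_iff:
  "x \<in> carrier G \<Longrightarrow> y \<in> carrier G \<Longrightarrow> x \<otimes> inv y = \<one> \<longleftrightarrow> x = y"
  using inv_solve_right'[of \<one> x y] by simp

lemma (in group) pow_cong:
  fixes m a b :: nat
  assumes x: "x \<in> carrier G" "x [^] m = \<one>" and ab: "[a = b] (mod m)"
  shows "x [^] a = x [^] b"
proof -
  have "int (ord x) dvd int m"
    using x pow_eq_id by simp
  moreover have "int m dvd int b - int a"
    using ab by (metis cong_iff_dvd_diff cong_int_iff cong_sym)
  ultimately have "int (ord x) dvd int b - int a"
    by (rule dvd_trans)
  then show ?thesis
    using int_pow_eq[OF x(1), of "int a" "int b"] x(1) by (simp add: int_pow_int)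
qed

lemma (in group) pow_order_cong:
  fixes a b :: nat
  assumes "finite (carrier G)" "x \<in> carrier G" "[a = b] (mod order G)"
  shows "x [^] a = x [^] b"
  using assms pow_cong pow_order_eq_1 by blast

lemma (in group) pow_coprime_bij:
  assumes fin: "finite (carrier G)" and t: "coprime t (order G)"
  shows "bij_betw (\<lambda>x. x [^] t) (carrier G) (carrier G)"
proof -
  obtain s where s: "[t * s = 1] (mod order G)"
    using cong_solve_coprime_nat[OF t] by (metis One_nat_def)
  have inverse: "(x [^] t) [^] s = x" "(x [^] s) [^] t = x" if "x \<in> carrier G" for x
    using pow_order_cong[OF fin that s] that by (simp_all add: nat_pow_pow mult.commute)
  show ?thesis
    by (rule bij_betwI[where g = "\<lambda>x. x [^] s"]) (auto simp: inverse)
qed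

lemma (in group) pow_coprime_inj:
  assumes "finite (carrier G)" "coprime t (order G)" "x \<in> carrier G" "y \<in> carrier G"
    and "x [^] t = y [^] t"
  shows "x = y"
  using pow_coprime_bij[OF assms(1,2)] assms(3-5) by (auto simp: bij_betw_def inj_on_def)

definition list_prod :: "('a, 'b) monoid_scheme \<Rightarrow> 'a list \<Rightarrow> 'a" where
  "list_prod G xs = foldr (\<otimes>\<^bsub>G\<^esub>) xs \<one>\<^bsub>G\<^esub>"

context monoid
begin

lemma list_prod_Nil [simp]: "list_prod G [] = \<one>"
  by (simp add: list_prod_def)

lemma list_prod_Cons [simp]: "list_prod G (x # xs) = x \<otimes> list_prod G xs"
  by (simp add: list_prod_def)

lemma list_prod_closed [intro, simp]: "set xs \<subseteq> carrier G \<Longrightarrow> list_prod G xs \<in> carrier G"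
  by (induction xs) auto

lemma list_prod_append:
  "set xs \<subseteq> carrier G \<Longrightarrow> set ys \<subseteq> carrier G \<Longrightarrow> list_prod G (xs @ ys) = list_prod G xs \<otimes> list_prod G ys"
  by (induction xs) (auto simp: m_assoc)

lemma list_prod_replicate: "x \<in> carrier G \<Longrightarrow> list_prod G (replicate n x) = x [^] n"
  by (induction n) (simp_all, metis nat_pow_Suc nat_pow_Suc2)

end

lemma (in comm_monoid) list_prod_rotate1:
  assumes "set xs \<subseteq> carrier G"
  shows "list_prod G (rotate1 xs) = list_prod G xs"
proof (cases xs)
  case (Cons x ys)
  then show ?thesis
    using assms by (simp add: list_prod_append m_comm)
qed simp

definition torsion :: "('a, 'b) monoid_scheme \<Rightarrow> nat \<Rightarrow> 'a set" where
  "torsion G m = {x \<in> carrier G. x [^]\<^bsub>G\<^esub> m = \<one>\<^bsub>G\<^esub>}"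

definition crt_idempotent :: "nat \<Rightarrow> nat \<Rightarrow> nat" where
  "crt_idempotent m n = (SOME e. [e = 1] (mod m) \<and> [e = 0] (mod n))"

lemma crt_idempotent:
  assumes "coprime m n"
  shows "[crt_idempotent m n = 1] (mod m)" "[crt_idempotent m n = 0] (mod n)"
  using someI_ex[OF binary_chinese_remainder_nat[OF assms, of 1 0]]
  unfolding crt_idempotent_def by blast+

definition coprime_proj :: "('a, 'b) monoid_scheme \<Rightarrow> nat \<Rightarrow> nat \<Rightarrow> 'a \<Rightarrow> 'a" where
  "coprime_proj G m n x = x [^]\<^bsub>G\<^esub> crt_idempotent m n"

context comm_group
begin

lemma torsion_subset: "torsion G m \<subseteq> carrier G"
  by (auto simp: torsion_def)

lemma one_torsion [simp]: "\<one> \<in> torsion G m"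
  by (simp add: torsion_def)

lemma torsion_pow_closed:
  assumes "x \<in> torsion G m"
  shows "x [^] (k::nat) \<in> torsion G m"
proof -
  have x: "x \<in> carrier G" "x [^] m = \<one>"
    using assms by (auto simp: torsion_def)
  have "(x [^] k) [^] m = (x [^] m) [^] k"
    using x(1) by (simp add: nat_pow_pow mult.commute)
  then show ?thesis
    using x by (simp add: torsion_def)
qed

lemma torsion_div_closed: "x \<in> torsion G m \<Longrightarrow> y \<in> torsion G m \<Longrightarrow> x \<otimes> inv y \<in> torsion G m"
  by (auto simp: torsion_def nat_pow_distrib nat_pow_inv)

lemma torsion_pow_inj:
  assumes "x \<in> torsion G n" "y \<in> torsion G n" "coprime j n" "x [^] j = y [^] j"
  shows "x = y"
proof -
  have carrier: "x \<in> carrier G" "y \<in> carrier G"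
    using assms(1,2) torsion_subset by blast+
  have "x \<otimes> inv y \<in> torsion G n"
    using assms(1,2) by (rule torsion_div_closed)
  moreover have "(x \<otimes> inv y) [^] j = \<one>"
    using carrier assms(4) by (simp add: nat_pow_distrib nat_pow_inv)
  ultimately have "x \<otimes> inv y = \<one>"
    using pow_eq_one_coprime[of "x \<otimes> inv y" j n] assms(3) by (auto simp: torsion_def)
  then show ?thesis
    using carrier mult_inv_eq_one_iff by blast
qed

lemma torsion_odd_inv_eq_self:
  assumes x: "x \<in> torsion G n" and n: "odd n" and inv: "inv x = x"
  shows "x = \<one>"
proof -
  have xc: "x \<in> carrier G"
    using x torsion_subset by blast
  then have "x [^] (2::nat) = x \<otimes> inv x"
    using inv by (simp add: numeral_2_eq_2)
  then have "x [^] (2::nat) = \<one> [^] (2::nat)"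
    using xc by simp
  moreover have "coprime (2::nat) n"
    using n by simp
  ultimately show ?thesis
    using torsion_pow_inj[OF x one_torsion] by blast
qed

end

lemma (in group) subgroup_pow_card_eq_one:
  assumes "subgroup H G" "finite H" "x \<in> H"
  shows "x [^] card H = \<one>"
proof -
  interpret H: group "G\<lparr>carrier := H\<rparr>"
    using subgroup.subgroup_is_group[OF assms(1)] is_group by blast
  have "x [^]\<^bsub>G\<lparr>carrier := H\<rparr>\<^esub> order (G\<lparr>carrier := H\<rparr>) = \<one>\<^bsub>G\<lparr>carrier := H\<rparr>\<^esub>"
    using H.pow_order_eq_1 assms(3) by simp
  then show ?thesis
    using nat_pow_consistent[of x "card H" H] by (simp add: order_def)
qed

lemma (in group) prime_power_le_card_torsion:
  assumes fin: "finite (carrier G)" and q: "Factorial_Ring.prime q" and order: "order G = q ^ a * k"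
  shows "q ^ a \<le> card (torsion G (q ^ a))"
proof -
  obtain H where H: "subgroup H G" "card H = q ^ a"
    using sylow_thm[OF q is_group order fin] by blast
  have "finite H"
    using subgroup.subset[OF H(1)] fin finite_subset by blast
  then have "H \<subseteq> torsion G (q ^ a)"
    using H subgroup_pow_card_eq_one subgroup.mem_carrier by (fastforce simp: torsion_def)
  then show ?thesis
    using H(2) fin card_mono[of "torsion G (q ^ a)" H] by (auto simp: torsion_def)
qed

locale coprime_split_group = comm_group G for G (structure) +
  fixes m n :: nat
  assumes order_eq: "order G = m * n" and coprime_factors: "coprime m n"
begin

sublocale swap: coprime_split_group G n m
  using order_eq coprime_factors by unfold_locales (simp_all add: mult.commute coprime_commute)

lemmas idempotent_cong = crt_idempotent[OF coprime_factors]

lemma pow_order_eq_one [simp]: "x \<in> carrier G \<Longrightarrow> x [^] (m * n) = \<one>"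
  using pow_order_eq_1 order_eq by metis

lemma coprime_proj_closed [simp]: "x \<in> carrier G \<Longrightarrow> coprime_proj G m n x \<in> carrier G"
  by (simp add: coprime_proj_def)

lemma coprime_proj_torsion:
  assumes x: "x \<in> carrier G"
  shows "coprime_proj G m n x \<in> torsion G m"
proof -
  have "[crt_idempotent m n * m = 0] (mod m * n)"
    using idempotent_cong(2) by (simp add: cong_0_iff)
  then have "(x [^] crt_idempotent m n) [^] m = \<one>"
    using pow_cong[OF x pow_order_eq_one[OF x]] x by (simp add: nat_pow_pow)
  then show ?thesis
    using x by (simp add: coprime_proj_def torsion_def)
qed

lemma coprime_proj_torsion_id: "x \<in> torsion G m \<Longrightarrow> coprime_proj G m n x = x"
  unfolding coprime_proj_def torsion_def using pow_cong[OF _ _ idempotent_cong(1)] by simp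

lemma coprime_proj_torsion_other: "x \<in> torsion G n \<Longrightarrow> coprime_proj G m n x = \<one>"
  unfolding coprime_proj_def torsion_def using pow_cong[OF _ _ idempotent_cong(2)] by simp

lemma coprime_proj_mult:
  "x \<in> carrier G \<Longrightarrow> y \<in> carrier G \<Longrightarrow> coprime_proj G m n (x \<otimes> y) = coprime_proj G m n x \<otimes> coprime_proj G m n y"
  by (simp add: coprime_proj_def nat_pow_distrib)

lemma coprime_proj_inv: "x \<in> carrier G \<Longrightarrow> coprime_proj G m n (inv x) = inv (coprime_proj G m n x)"
  by (simp add: coprime_proj_def nat_pow_inv)

lemma coprime_proj_pow: "x \<in> carrier G \<Longrightarrow> coprime_proj G m n (x [^] (k::nat)) = coprime_proj G m n x [^] k"
  by (simp add: coprime_proj_def nat_pow_pow mult.commute)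

end

(* Reopened so that the facts above are also available for the swapped interpretation. *)
context coprime_split_group
begin

lemma coprime_proj_decomp:
  assumes x: "x \<in> carrier G"
  shows "coprime_proj G m n x \<otimes> coprime_proj G n m x = x"
proof -
  let ?e = "crt_idempotent m n + crt_idempotent n m"
  have "[?e = 1 + 0] (mod m)" "[?e = 0 + 1] (mod n)"
    using cong_add[OF idempotent_cong(1) swap.idempotent_cong(2)]
      cong_add[OF idempotent_cong(2) swap.idempotent_cong(1)] by simp_all
  then have "[?e = 1] (mod m * n)"
    using coprime_cong_mult_nat coprime_factors by simp
  then have "x [^] ?e = x"
    using pow_cong[OF x pow_order_eq_one[OF x]] x by simp
  then show ?thesis
    using x by (simp add: coprime_proj_def nat_pow_mult)
qed

lemma coprime_proj_eq_one_iff: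
  assumes x: "x \<in> carrier G"
  shows "coprime_proj G m n x = \<one> \<longleftrightarrow> x \<in> torsion G n"
proof
  assume "coprime_proj G m n x = \<one>"
  then have "coprime_proj G n m x = x"
    using coprime_proj_decomp[OF x] x swap.coprime_proj_closed by simp
  then show "x \<in> torsion G n"
    using swap.coprime_proj_torsion[OF x] by simp
qed (rule coprime_proj_torsion_other)

lemma coprime_proj_eq_iff:
  assumes x: "x \<in> carrier G" and y: "y \<in> carrier G"
  shows "coprime_proj G m n x = coprime_proj G m n y \<longleftrightarrow> x \<otimes> inv y \<in> torsion G n"
proof -
  have "coprime_proj G m n (x \<otimes> inv y) = coprime_proj G m n x \<otimes> inv (coprime_proj G m n y)"
    using x y by (simp add: coprime_proj_mult coprime_proj_inv)
  then show ?thesis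
    using x y coprime_proj_eq_one_iff[of "x \<otimes> inv y"] mult_inv_eq_one_iff by simp
qed

lemma card_torsion_mult:
  assumes "finite (carrier G)"
  shows "card (torsion G m) * card (torsion G n) = m * n"
proof -
  have "bij_betw (\<lambda>x. (coprime_proj G m n x, coprime_proj G n m x)) (carrier G) (torsion G m \<times> torsion G n)"
  proof (rule bij_betwI[where g = "\<lambda>(h, g). h \<otimes> g"])
    show "(\<lambda>x. (coprime_proj G m n x, coprime_proj G n m x)) \<in> carrier G \<rightarrow> torsion G m \<times> torsion G n"
      using coprime_proj_torsion swap.coprime_proj_torsion by auto
    show "(\<lambda>(h, g). h \<otimes> g) \<in> torsion G m \<times> torsion G n \<rightarrow> carrier G"
      using torsion_subset by auto
    show "(case (coprime_proj G m n x, coprime_proj G n m x) of (h, g) \<Rightarrow> h \<otimes> g) = x" if "x \<in> carrier G" for x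
      using coprime_proj_decomp[OF that] by simp
    show "(coprime_proj G m n (case y of (h, g) \<Rightarrow> h \<otimes> g), coprime_proj G n m (case y of (h, g) \<Rightarrow> h \<otimes> g)) = y"
      if y: "y \<in> torsion G m \<times> torsion G n" for y
    proof -
      obtain h g where hg: "y = (h, g)" "h \<in> torsion G m" "g \<in> torsion G n"
        using y by blast
      then have "h \<in> carrier G" "g \<in> carrier G"
        using torsion_subset by blast+
      then show ?thesis
        using hg by (simp add: coprime_proj_mult swap.coprime_proj_mult coprime_proj_torsion_id coprime_proj_torsion_other
            swap.coprime_proj_torsion_id swap.coprime_proj_torsion_other)
    qed
  qed
  then have "card (carrier G) = card (torsion G m \<times> torsion G n)"
    by (rule bij_betw_same_card)
  then show ?thesis
    using order_eq by (simp add: order_def card_cartesian_product)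
qed

lemma card_torsion_prime_powers:
  assumes q: "Factorial_Ring.prime q" and r: "Factorial_Ring.prime r" and m: "m = q ^ a" and n: "n = r ^ b"
  shows "card (torsion G m) = m"
proof -
  have "card (carrier G) > 0"
    using order_eq m n prime_gt_0_nat[OF q] prime_gt_0_nat[OF r] by (simp add: order_def)
  then have fin: "finite (carrier G)"
    by (simp add: card_gt_0_iff)
  have m_le: "m \<le> card (torsion G m)"
    using prime_power_le_card_torsion[OF fin q] order_eq m by blast
  have n_le: "n \<le> card (torsion G n)"
    using prime_power_le_card_torsion[OF fin r] order_eq n by (metis mult.commute)
  have "n > 0"
    using n r prime_gt_0_nat by simp
  show ?thesis
  proof (rule ccontr)
    assume "card (torsion G m) \<noteq> m"
    then have "m * n < card (torsion G m) * card (torsion G n)"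
      using m_le n_le \<open>n > 0\<close> by (intro mult_less_le_imp_less) auto
    then show False
      using card_torsion_mult[OF fin] by simp
  qed
qed

end

section \<open>Partial difference sets and the multiplier theorem\<close>

locale pds = comm_group G for G (structure) +
  fixes D :: "'a set" and v k lam mu :: int
  assumes finite_carrier: "finite (carrier G)"
    and is_pds: "is_pds G D v k lam mu"
begin

definition diff_reps :: "'a \<Rightarrow> ('a \<times> 'a) set" where
  "diff_reps x = {(g, h). g \<in> D \<and> h \<in> D \<and> g \<noteq> h \<and> g \<otimes> inv h = x}"

definition quotient_pairs :: "'a set \<Rightarrow> ('a \<times> 'a) set" where
  "quotient_pairs S = {(a, b). a \<in> D \<and> b \<in> D \<and> a \<otimes> inv b \<in> S}"

lemma D_subset: "D \<subseteq> carrier G"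
  using is_pds by (simp add: is_pds_def)

lemma order_eq: "int (order G) = v"
  using is_pds by (simp add: is_pds_def order_def)

lemma card_D: "int (card D) = k"
  using is_pds by (simp add: is_pds_def)

lemma card_diff_reps: "x \<in> carrier G - {\<one>} \<Longrightarrow> int (card (diff_reps x)) = (if x \<in> D then lam else mu)"
  using is_pds by (simp add: is_pds_def diff_reps_def)

lemma finite_D: "finite D"
  using finite_carrier D_subset finite_subset by blast

lemma card_quotient_pairs:
  assumes S: "S \<subseteq> carrier G" "\<one> \<in> S"
  shows "int (card (quotient_pairs S)) = k + lam * int (card (D \<inter> (S - {\<one>}))) + mu * int (card (S - {\<one>} - D))"
proof -
  have finS: "finite S"
    using S finite_carrier finite_subset by blast
  have diag: "{(a, b). a \<in> D \<and> b \<in> D \<and> a \<otimes> inv b = \<one>} = (\<lambda>a. (a, a)) ` D"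
    using D_subset by (auto simp: mult_inv_eq_one_iff subset_iff)
  have "quotient_pairs S = (\<lambda>a. (a, a)) ` D \<union> (\<Union>x\<in>S - {\<one>}. diff_reps x)"
    using S D_subset by (auto simp: quotient_pairs_def diff_reps_def diag[symmetric] subset_iff)
  moreover have fin_reps: "finite (diff_reps x)" for x
    by (rule finite_subset[of _ "D \<times> D"]) (auto simp: diff_reps_def finite_D)
  moreover have "(\<lambda>a. (a, a)) ` D \<inter> (\<Union>x\<in>S - {\<one>}. diff_reps x) = {}"
    by (auto simp: diff_reps_def)
  moreover have "card (\<Union>x\<in>S - {\<one>}. diff_reps x) = (\<Sum>x\<in>S - {\<one>}. card (diff_reps x))"
    using finS fin_reps by (intro card_UN_disjoint) (auto simp: diff_reps_def)
  moreover have "card ((\<lambda>a. (a, a)) ` D) = card D"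
    by (simp add: card_image inj_on_def)
  ultimately have "card (quotient_pairs S) = card D + (\<Sum>x\<in>S - {\<one>}. card (diff_reps x))"
    using finS finite_D fin_reps by (simp add: card_Un_disjoint)
  then have "int (card (quotient_pairs S)) = k + (\<Sum>x\<in>S - {\<one>}. int (card (diff_reps x)))"
    using card_D by simp
  also have "(\<Sum>x\<in>S - {\<one>}. int (card (diff_reps x))) = (\<Sum>x\<in>S - {\<one>}. if x \<in> D then lam else mu)"
    using S by (intro sum.cong) (auto simp: card_diff_reps)
  also have "\<dots> = lam * int (card (D \<inter> (S - {\<one>}))) + mu * int (card (S - {\<one>} - D))"
    using finS by (simp add: sum.If_cases Int_commute Diff_eq)
  finally show ?thesis
    by simp
qed

lemma one_notin_D_by_counting:
  assumes "k * k \<noteq> k + lam * (k - 1) + mu * (v - k)"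
  shows "\<one> \<notin> D"
proof
  assume one: "\<one> \<in> D"
  have "quotient_pairs (carrier G) = D \<times> D"
    using D_subset by (auto simp: quotient_pairs_def)
  then have "int (card (quotient_pairs (carrier G))) = k * k"
    using card_D by (simp add: card_cartesian_product)
  moreover have "D \<inter> (carrier G - {\<one>}) = D - {\<one>}" "carrier G - {\<one>} - D = carrier G - D"
    using D_subset one by auto
  moreover have "int (card (D - {\<one>})) = k - 1"
  proof -
    have "card D > 0"
      using one finite_D card_gt_0_iff by blast
    then show ?thesis
      using one finite_D card_D by (simp add: of_nat_diff)
  qed
  moreover have "int (card (carrier G - D)) = v - k"
    using D_subset finite_carrier order_eq card_D card_mono[OF finite_carrier D_subset]
    by (simp add: card_Diff_subset[OF finite_D D_subset] order_def of_nat_diff)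
  ultimately show False
    using card_quotient_pairs[of "carrier G"] assms by simp
qed

lemma inv_mem_D_by_counting:
  assumes one: "\<one> \<notin> D" and lam_mu: "lam \<noteq> mu" and x: "x \<in> D"
  shows "inv x \<in> D"
proof -
  have xc: "x \<in> carrier G" and x1: "x \<noteq> \<one>"
    using x one D_subset by auto
  have "diff_reps (inv x) = (\<lambda>(a, b). (b, a)) ` diff_reps x"
  proof (rule equalityI; rule subsetI)
    fix z assume "z \<in> diff_reps (inv x)"
    then obtain a b where ab: "z = (a, b)" "a \<in> D" "b \<in> D" "a \<noteq> b" "a \<otimes> inv b = inv x"
      by (auto simp: diff_reps_def)
    have "a \<in> carrier G" "b \<in> carrier G"
      using ab(2,3) D_subset by auto
    then have "b \<otimes> inv a = inv (a \<otimes> inv b)"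
      by (simp add: inv_mult_group)
    then have "(b, a) \<in> diff_reps x"
      using ab xc by (simp add: diff_reps_def)
    then show "z \<in> (\<lambda>(a, b). (b, a)) ` diff_reps x"
      using ab by force
  next
    fix z assume "z \<in> (\<lambda>(a, b). (b, a)) ` diff_reps x"
    then obtain a b where "z = (b, a)" "a \<in> D" "b \<in> D" "a \<noteq> b" "a \<otimes> inv b = x"
      by (auto simp: diff_reps_def)
    then show "z \<in> diff_reps (inv x)"
      using D_subset by (auto simp: diff_reps_def inv_mult_group subset_iff)
  qed
  then have "card (diff_reps (inv x)) = card (diff_reps x)"
    by (simp add: card_image swap_inj_on)
  then show ?thesis
    using card_diff_reps[of x] card_diff_reps[of "inv x"] x xc x1 lam_mu by (auto split: if_splits)
qed

lemma fiber_moments: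
  assumes Q: "finite Q" and f: "\<And>a. a \<in> carrier G \<Longrightarrow> f a \<in> Q"
    and f_eq: "\<And>a b. a \<in> carrier G \<Longrightarrow> b \<in> carrier G \<Longrightarrow> f a = f b \<longleftrightarrow> a \<otimes> inv b \<in> S"
  shows "(\<Sum>g\<in>Q. card {a\<in>D. f a = g}) = card D"
    and "(\<Sum>g\<in>Q. card {a\<in>D. f a = g} ^ 2) = card (quotient_pairs S)"
proof -
  have fin: "finite {a\<in>D. f a = g}" for g
    using finite_D by simp
  have "D = (\<Union>g\<in>Q. {a\<in>D. f a = g})"
    using f D_subset by auto
  moreover have "card (\<Union>g\<in>Q. {a\<in>D. f a = g}) = (\<Sum>g\<in>Q. card {a\<in>D. f a = g})"
    using Q fin by (intro card_UN_disjoint) auto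
  ultimately show "(\<Sum>g\<in>Q. card {a\<in>D. f a = g}) = card D"
    by simp
  have "quotient_pairs S = {(a, b). a \<in> D \<and> b \<in> D \<and> f a = f b}"
    using f_eq D_subset by (auto simp: quotient_pairs_def)
  also have "\<dots> = (\<Union>g\<in>Q. {a\<in>D. f a = g} \<times> {a\<in>D. f a = g})"
    using f D_subset by auto
  finally have "quotient_pairs S = (\<Union>g\<in>Q. {a\<in>D. f a = g} \<times> {a\<in>D. f a = g})" .
  moreover have "card (\<Union>g\<in>Q. {a\<in>D. f a = g} \<times> {a\<in>D. f a = g}) = (\<Sum>g\<in>Q. card ({a\<in>D. f a = g} \<times> {a\<in>D. f a = g}))"
    using Q fin by (intro card_UN_disjoint) auto
  ultimately show "(\<Sum>g\<in>Q. card {a\<in>D. f a = g} ^ 2) = card (quotient_pairs S)"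
    by (simp add: card_cartesian_product power2_eq_square)
qed

definition words :: "nat \<Rightarrow> 'a \<Rightarrow> 'a list set" where
  "words j x = {xs. set xs \<subseteq> D \<and> length xs = j \<and> list_prod G xs = x}"

lemma finite_words: "finite (words j x)"
  by (rule finite_subset[of _ "{xs. set xs \<subseteq> D \<and> length xs = j}"])
    (auto simp: words_def finite_lists_length_eq finite_D)

lemma card_words_Suc:
  assumes x: "x \<in> carrier G"
  shows "card (words (Suc j) x) = (\<Sum>a\<in>D. card (words j (inv a \<otimes> x)))"
proof -
  have "words (Suc j) x = (\<Union>a\<in>D. (Cons a) ` words j (inv a \<otimes> x))"
  proof (rule equalityI; rule subsetI)
    fix xs assume "xs \<in> words (Suc j) x"
    then obtain a ys where "xs = a # ys" "a \<in> D" "set ys \<subseteq> D" "length ys = j" "a \<otimes> list_prod G ys = x"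
      by (cases xs) (auto simp: words_def)
    moreover have "list_prod G ys = inv a \<otimes> x"
      using calculation x D_subset inv_solve_left[of "list_prod G ys" a x] by auto
    ultimately show "xs \<in> (\<Union>a\<in>D. (Cons a) ` words j (inv a \<otimes> x))"
      by (auto simp: words_def)
  next
    fix xs assume "xs \<in> (\<Union>a\<in>D. (Cons a) ` words j (inv a \<otimes> x))"
    then show "xs \<in> words (Suc j) x"
      using x D_subset by (auto simp: words_def subset_iff m_assoc[symmetric])
  qed
  moreover have "card (\<Union>a\<in>D. (Cons a) ` words j (inv a \<otimes> x))
      = (\<Sum>a\<in>D. card ((Cons a) ` words j (inv a \<otimes> x)))"
    using finite_D finite_words by (intro card_UN_disjoint) auto
  ultimately show ?thesis
    by (simp add: card_image)
qed

lemma sum_card_words: "(\<Sum>x\<in>carrier G. card (words j x)) = card D ^ j"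
proof -
  have "(\<Union>x\<in>carrier G. words j x) = {xs. set xs \<subseteq> D \<and> length xs = j}"
    using D_subset by (auto simp: words_def)
  moreover have "card (\<Union>x\<in>carrier G. words j x) = (\<Sum>x\<in>carrier G. card (words j x))"
    using finite_carrier finite_words by (intro card_UN_disjoint) (auto simp: words_def)
  ultimately show ?thesis
    using card_lists_length_eq[OF finite_D] by simp
qed

text \<open>Rotating a word of prime length \<open>q\<close> preserves its product, and the only words fixed
  by rotation are the constant ones; so modulo \<open>q\<close> only those count.\<close>
lemma card_words_prime_cong:
  assumes q: "Factorial_Ring.prime q"
  shows "[card (words q x) = card {a\<in>D. a [^] q = x}] (mod q)"
proof -
  have "q dvd card (words q x - range (replicate q))"
  proof (rule prime_dvd_card_rotation_closed[OF q finite_words])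
    show "length xs = q" if "xs \<in> words q x" for xs
      using that by (simp add: words_def)
    show "rotate1 xs \<in> words q x" if "xs \<in> words q x" for xs
      using that D_subset by (auto simp: words_def list_prod_rotate1)
  qed
  moreover have "words q x \<inter> range (replicate q) = (replicate q) ` {a\<in>D. a [^] q = x}"
    using D_subset prime_gt_0_nat[OF q] by (auto simp: words_def list_prod_replicate subset_iff)
  moreover have "card ((replicate q) ` {a\<in>D. a [^] q = x}) = card {a\<in>D. a [^] q = x}"
    using prime_gt_0_nat[OF q] by (intro card_image) (auto simp: inj_on_def)
  moreover have "card (words q x) = card (words q x \<inter> range (replicate q)) + card (words q x - range (replicate q))"
    using finite_words by (metis card_Int_Diff)
  ultimately show ?thesis
    by (metis cong_add_lcancel_0_nat cong_0_iff)
qed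

end

text \<open>If \<open>D\<^sup>2 = \<alpha> + \<beta> D + \<gamma> G\<close> in the group ring and \<open>|D| = k\<close>, then
  \<open>D\<^sup>j = a + b D + c G\<close> for \<open>(a, b, c) = power_coeffs \<alpha> \<beta> \<gamma> k j\<close>.\<close>
fun power_coeffs :: "int \<Rightarrow> int \<Rightarrow> int \<Rightarrow> int \<Rightarrow> nat \<Rightarrow> int \<times> int \<times> int" where
  "power_coeffs \<alpha> \<beta> \<gamma> k 0 = (1, 0, 0)"
| "power_coeffs \<alpha> \<beta> \<gamma> k (Suc j) =
     (case power_coeffs \<alpha> \<beta> \<gamma> k j of (a, b, c) \<Rightarrow> (\<alpha> * b, a + \<beta> * b, \<gamma> * b + k * c))"

lemma power_coeffs_root:
  assumes root: "\<theta> ^ 2 = \<alpha> + \<beta> * \<theta>" and coeffs: "power_coeffs \<alpha> \<beta> \<gamma> k j = (a, b, c)"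
  shows "\<theta> ^ j = a + b * \<theta>"
  using coeffs
proof (induction j arbitrary: a b c)
  case (Suc j)
  obtain a' b' c' where IH: "power_coeffs \<alpha> \<beta> \<gamma> k j = (a', b', c')"
    by (metis prod_cases3)
  have "\<theta> ^ Suc j = a' * \<theta> + b' * \<theta> ^ 2"
    using Suc.IH[OF IH] by (simp add: algebra_simps power2_eq_square)
  also have "\<dots> = \<alpha> * b' + (a' + \<beta> * b') * \<theta>"
    using root by (simp add: algebra_simps)
  finally show ?case
    using Suc.prems IH by simp
qed simp

locale regular_pds = pds +
  assumes one_notin_D: "\<one> \<notin> D" and inv_mem_D: "x \<in> D \<Longrightarrow> inv x \<in> D"
begin

lemma card_quotient_pairs_regular:
  assumes S: "S \<subseteq> carrier G" "\<one> \<in> S"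
  shows "int (card (quotient_pairs S))
    = k + lam * int (card (D \<inter> S)) + mu * (int (card S) - 1 - int (card (D \<inter> S)))"
proof -
  have finS: "finite S"
    using S finite_carrier finite_subset by blast
  have DS: "D \<inter> S \<subseteq> S - {\<one>}"
    using one_notin_D by auto
  have "D \<inter> (S - {\<one>}) = D \<inter> S" "S - {\<one>} - D = (S - {\<one>}) - (D \<inter> S)"
    using one_notin_D by auto
  moreover have "card (S - {\<one>} - (D \<inter> S)) = card (S - {\<one>}) - card (D \<inter> S)"
    using finS DS by (intro card_Diff_subset) (auto intro: finite_subset)
  moreover have "card (D \<inter> S) \<le> card (S - {\<one>})"
    using finS DS by (intro card_mono) auto
  moreover have "card (S - {\<one>}) = card S - 1" "card S \<ge> 1"
    using finS S card_mono[OF finS, of "{\<one>}"] by auto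
  ultimately show ?thesis
    using card_quotient_pairs[OF S] by (simp add: of_nat_diff)
qed

lemma card_D_square_fiber:
  assumes x: "x \<in> carrier G"
  shows "int (card {a\<in>D. inv a \<otimes> x \<in> D}) = (k - mu) * of_bool (x = \<one>) + (lam - mu) * of_bool (x \<in> D) + mu"
proof (cases "x = \<one>")
  case True
  have "{a\<in>D. inv a \<otimes> x \<in> D} = D"
    using True inv_mem_D D_subset by auto
  then show ?thesis
    using True one_notin_D card_D by simp
next
  case False
  have inv_mult_mult_cancel: "inv a \<otimes> x \<otimes> a = x" if "a \<in> carrier G" for a
    using that x by (metis inv_closed l_inv l_one m_assoc m_comm)
  have mult_mult_inv_cancel: "h \<otimes> (g \<otimes> inv h) = g" if "g \<in> carrier G" "h \<in> carrier G" for g h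
    using that by (simp add: m_lcomm)
  have "bij_betw (\<lambda>a. (inv a \<otimes> x, inv a)) {a\<in>D. inv a \<otimes> x \<in> D} (diff_reps x)"
  proof (rule bij_betwI[where g = "\<lambda>(g, h). inv h"])
    show "(\<lambda>a. (inv a \<otimes> x, inv a)) \<in> {a\<in>D. inv a \<otimes> x \<in> D} \<rightarrow> diff_reps x"
      using False x D_subset inv_mem_D inv_mult_mult_cancel by (auto simp: diff_reps_def subset_iff)
    show "(\<lambda>(g, h). inv h) \<in> diff_reps x \<rightarrow> {a\<in>D. inv a \<otimes> x \<in> D}"
      using D_subset inv_mem_D mult_mult_inv_cancel by (auto simp: diff_reps_def subset_iff)
  qed (use D_subset mult_mult_inv_cancel in \<open>auto simp: diff_reps_def subset_iff\<close>)
  then show ?thesis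
    using card_diff_reps[of x] False x by (simp add: bij_betw_same_card)
qed

lemma card_words:
  assumes "power_coeffs (k - mu) (lam - mu) mu k j = (a, b, c)" and "x \<in> carrier G"
  shows "int (card (words j x)) = a * of_bool (x = \<one>) + b * of_bool (x \<in> D) + c"
  using assms
proof (induction j arbitrary: a b c x)
  case 0
  then have "words 0 x = (if x = \<one> then {[]} else {})"
    by (auto simp: words_def)
  then show ?case
    using 0 by simp
next
  case (Suc j)
  obtain a' b' c' where IH: "power_coeffs (k - mu) (lam - mu) mu k j = (a', b', c')"
    by (metis prod_cases3)
  have inv_x: "inv y \<otimes> x \<in> carrier G" if "y \<in> D" for y
    using that Suc.prems(2) D_subset by auto
  have "int (card (words (Suc j) x)) = (\<Sum>y\<in>D. int (card (words j (inv y \<otimes> x))))"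
    using card_words_Suc[OF Suc.prems(2)] by simp
  also have "\<dots> = (\<Sum>y\<in>D. a' * of_bool (inv y \<otimes> x = \<one>) + b' * of_bool (inv y \<otimes> x \<in> D) + c')"
    using Suc.IH[OF IH inv_x] by simp
  also have "\<dots> = a' * (\<Sum>y\<in>D. of_bool (inv y \<otimes> x = \<one>)) + b' * (\<Sum>y\<in>D. of_bool (inv y \<otimes> x \<in> D)) + c' * k"
    using card_D by (simp add: sum.distrib sum_distrib_left del: sum_of_bool_eq)
  also have "(\<Sum>y\<in>D. of_bool (inv y \<otimes> x = \<one>)) = (\<Sum>y\<in>D. of_bool (y = x) :: int)"
    using Suc.prems(2) D_subset by (intro sum.cong) (auto simp: inv_solve_left')
  also have "\<dots> = of_bool (x \<in> D)"
    using finite_D by (simp add: of_bool_def sum.delta del: sum_of_bool_eq)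
  also have "(\<Sum>y\<in>D. of_bool (inv y \<otimes> x \<in> D)) = int (card {y\<in>D. inv y \<otimes> x \<in> D})"
    using finite_D by (simp add: Int_def)
  also have "\<dots> = (k - mu) * of_bool (x = \<one>) + (lam - mu) * of_bool (x \<in> D) + mu"
    using card_D_square_fiber[OF Suc.prems(2)] .
  finally have count: "int (card (words (Suc j) x))
      = a' * of_bool (x \<in> D) + b' * ((k - mu) * of_bool (x = \<one>) + (lam - mu) * of_bool (x \<in> D) + mu) + c' * k" .
  have abc: "a = (k - mu) * b'" "b = a' + (lam - mu) * b'" "c = mu * b' + k * c'"
    using Suc.prems(1) IH by auto
  have "a' * e + b' * ((k - mu) * d + (lam - mu) * e + mu) + c' * k = a * d + b * e + c" for d e
    unfolding abc by (simp add: algebra_simps)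
  then show ?case
    unfolding count by (simp only:)
qed

lemma power_coeffs_card_eq:
  assumes "power_coeffs (k - mu) (lam - mu) mu k j = (a, b, c)"
  shows "a + b * k + c * v = k ^ j"
proof -
  have "(\<Sum>x\<in>carrier G. int (card (words j x))) = k ^ j"
    using sum_card_words[of j] card_D by (metis of_nat_power of_nat_sum)
  moreover have "(\<Sum>x\<in>carrier G. int (card (words j x)))
      = (\<Sum>x\<in>carrier G. a * of_bool (x = \<one>) + b * of_bool (x \<in> D) + c)"
    using card_words[OF assms] by simp
  moreover have "(\<Sum>x\<in>carrier G. of_bool (x = \<one>)) = (1::int)"
    using finite_carrier by (simp add: of_bool_def sum.delta del: sum_of_bool_eq)
  moreover have "carrier G \<inter> D = D"
    using D_subset by blast
  ultimately show ?thesis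
    using finite_carrier order_eq card_D
    by (simp add: sum.distrib sum_distrib_left order_def mult.commute)
qed

lemma pow_fiber_cong:
  assumes q: "Factorial_Ring.prime q" and coeffs: "power_coeffs (k - mu) (lam - mu) mu k q = (a, b, c)"
    and x: "x \<in> carrier G"
  shows "[int (card {y\<in>D. y [^] q = x}) = a * of_bool (x = \<one>) + b * of_bool (x \<in> D) + c] (mod int q)"
proof -
  have "[int (card {y\<in>D. y [^] q = x}) = int (card (words q x))] (mod int q)"
    using card_words_prime_cong[OF q] by (metis cong_int_iff cong_sym)
  then show ?thesis
    using card_words[OF coeffs x] by simp
qed

text \<open>\<open>\<theta>\<close> and \<open>\<tau>\<close> are the two eigenvalues of \<open>D\<close>, the roots of
  \<open>X\<^sup>2 - (\<lambda> - \<mu>) X - (k - \<mu>)\<close>; by Fermat, \<open>\<theta>\<^sup>q = a + b \<theta>\<close> and \<open>\<tau>\<^sup>q = a + b \<tau>\<close>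
  force \<open>D\<^sup>q \<equiv> D\<close> modulo \<open>q\<close> in the group ring.\<close>
lemma power_coeffs_prime_cong:
  assumes roots: "\<theta> + \<tau> = lam - mu" "\<theta> * \<tau> = mu - k"
    and q: "Factorial_Ring.prime q" "coprime q (order G)" "coprime (int q) (\<theta> - \<tau>)"
    and coeffs: "power_coeffs (k - mu) (lam - mu) mu k q = (a, b, c)"
  shows "int q dvd a" "int q dvd b - 1" "int q dvd c"
proof -
  have "\<theta> ^ 2 = \<theta> * (\<theta> + \<tau>) - \<theta> * \<tau>" "\<tau> ^ 2 = \<tau> * (\<theta> + \<tau>) - \<theta> * \<tau>"
    by (simp_all add: power2_eq_square algebra_simps)
  then have "\<theta> ^ 2 = (k - mu) + (lam - mu) * \<theta>" "\<tau> ^ 2 = (k - mu) + (lam - mu) * \<tau>"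
    unfolding roots by (simp_all add: algebra_simps)
  then have pow_q: "\<theta> ^ q = a + b * \<theta>" "\<tau> ^ q = a + b * \<tau>"
    using power_coeffs_root coeffs by blast+
  have fermat: "int q dvd z ^ q - z" for z :: int
    using fermat_little_int[OF q(1)] by (simp add: cong_iff_dvd_diff)
  have "(\<theta> - \<tau>) * (b - 1) = (\<theta> ^ q - \<theta>) - (\<tau> ^ q - \<tau>)"
    using pow_q by (simp add: algebra_simps)
  then have "int q dvd (\<theta> - \<tau>) * (b - 1)"
    using fermat by simp
  then show b: "int q dvd b - 1"
    using q(3) by (simp add: coprime_dvd_mult_right_iff)
  have "a = (\<theta> ^ q - \<theta>) - (b - 1) * \<theta>"
    using pow_q by (simp add: algebra_simps)
  then show a: "int q dvd a"
    using fermat b by simp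
  have "c * v = (k ^ q - k) - a - (b - 1) * k"
    using power_coeffs_card_eq[OF coeffs] by (simp add: algebra_simps)
  then have "int q dvd c * v"
    using fermat a b by simp
  moreover have "coprime (int q) v"
    using q(2) order_eq[symmetric] by simp
  ultimately show "int q dvd c"
    by (simp add: coprime_dvd_mult_left_iff)
qed

theorem multiplier_prime:
  assumes roots: "\<theta> + \<tau> = lam - mu" "\<theta> * \<tau> = mu - k"
    and q: "Factorial_Ring.prime q" "coprime q (order G)" "coprime (int q) (\<theta> - \<tau>)"
    and x: "x \<in> carrier G"
  shows "x \<in> D \<longleftrightarrow> x [^] q \<in> D"
proof -
  obtain a b c where coeffs: "power_coeffs (k - mu) (lam - mu) mu k q = (a, b, c)"
    by (metis prod_cases3)
  have "{y\<in>D. y [^] q = x [^] q} = (if x \<in> D then {x} else {})"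
    using pow_coprime_inj[OF finite_carrier q(2)] x D_subset by auto
  then have fiber: "int (card {y\<in>D. y [^] q = x [^] q}) = of_bool (x \<in> D)"
    by simp
  have "[of_bool (x \<in> D) = a * of_bool (x [^] q = \<one>) + b * of_bool (x [^] q \<in> D) + c] (mod int q)"
    using pow_fiber_cong[OF q(1) coeffs, of "x [^] q", unfolded fiber] x by simp
  moreover have "[a * d + b * e + c = e] (mod int q)" for d e
  proof -
    have "int q dvd a * d + (b - 1) * e + c"
      using power_coeffs_prime_cong[OF roots q coeffs] by simp
    moreover have "a * d + b * e + c - e = a * d + (b - 1) * e + c"
      by (simp add: algebra_simps)
    ultimately show ?thesis
      unfolding cong_iff_dvd_diff by (simp only:)
  qed
  ultimately have "int q dvd of_bool (x \<in> D) - of_bool (x [^] q \<in> D)"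
    using cong_trans cong_iff_dvd_diff by blast
  moreover have "int q > 1"
    using q(1) prime_gt_1_nat by simp
  ultimately show ?thesis
    by (cases "x \<in> D"; cases "x [^] q \<in> D") (auto simp: zdvd_not_zless)
qed

theorem multiplier:
  assumes roots: "\<theta> + \<tau> = lam - mu" "\<theta> * \<tau> = mu - k"
    and t: "coprime t (order G)" "coprime (int t) (\<theta> - \<tau>)"
    and x: "x \<in> carrier G"
  shows "x \<in> D \<longleftrightarrow> x [^] t \<in> D"
  using t x
proof (induction t arbitrary: x rule: prime_divisors_induct)
  case zero
  then obtain z where "carrier G = {z}"
    by (auto simp: order_def card_1_singleton_iff)
  then have "x = \<one>"
    using zero.prems(3) one_closed by auto
  then show ?case
    by simp
next
  case (unit t)
  then show ?case
    by simp
next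
  case (factor q t)
  have "coprime q (order G)" "coprime (int q) (\<theta> - \<tau>)"
    using factor.prems by simp_all
  then have "x [^] t \<in> D \<longleftrightarrow> (x [^] t) [^] q \<in> D"
    using multiplier_prime[OF roots factor.hyps] factor.prems(3) by simp
  then show ?case
    using factor.IH[of x] factor.prems by (simp add: nat_pow_pow mult.commute)
qed

end

section \<open>Partial difference sets with the parameters of the theorem\<close>

text \<open>In terms of the theorem, \<open>2u + 1 = p\<^sup>2\<^sup>s\<close>, \<open>3u - 1 = r\<close> and \<open>M = p\<^sup>4\<^sup>s\<close>.\<close>
locale pds_9M = pds +
  fixes u :: int and p e :: nat
  assumes v_eq: "v = 9 * (2 * u + 1) ^ 2"
    and k_eq: "k = (3 * u - 1) * (3 * (2 * u + 1) + 1)"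
    and lam_eq: "lam = - 3 * (2 * u + 1) + (3 * u - 1) ^ 2 + 3 * (3 * u - 1)"
    and mu_eq: "mu = (3 * u - 1) ^ 2 + (3 * u - 1)"
    and prime_p: "Factorial_Ring.prime p" and p_ge_5: "p \<ge> 5" and e_pos: "e > 0"
    and p_power_eq: "int (p ^ e) = (2 * u + 1) ^ 2" and u_nonneg: "u \<ge> 0"
begin

abbreviation "M \<equiv> p ^ e"

lemma order_G: "order G = 9 * M"
proof -
  have "int (order G) = int (9 * M)"
    using order_eq v_eq p_power_eq by simp
  then show ?thesis
    by (simp only: of_nat_eq_iff)
qed

lemma lam_minus_mu: "lam - mu = -5"
  unfolding lam_eq mu_eq by (simp add: algebra_simps)

sublocale regular_pds G D v k lam mu
proof
  have "k * k - (k + lam * (k - 1) + mu * (v - k)) = -5"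
    unfolding v_eq k_eq lam_eq mu_eq by (simp add: algebra_simps power2_eq_square)
  then show one: "\<one> \<notin> D"
    by (intro one_notin_D_by_counting) auto
  show "x \<in> D \<Longrightarrow> inv x \<in> D" for x
    using inv_mem_D_by_counting[OF one] lam_minus_mu by simp
qed

lemma M_gt_1: "M > 1"
  using p_ge_5 e_pos one_less_power[of p e] by simp

lemma odd_M: "odd M"
  using prime_odd_nat[OF prime_p] p_ge_5 by simp

lemma coprime_3_M: "coprime 3 M"
proof -
  have "\<not> p dvd 3"
    using p_ge_5 by (auto dest: dvd_imp_le)
  then have "coprime p 3"
    using prime_imp_coprime[OF prime_p] by blast
  then show ?thesis
    by (simp add: coprime_commute)
qed

lemma coprime_9_M: "coprime 9 M"
  using coprime_3_M coprime_power_left_iff[of 3 2 M] by simp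

sublocale split: coprime_split_group G 9 M
  using order_G coprime_9_M by unfold_locales

abbreviation "K \<equiv> torsion G 9"
abbreviation "H \<equiv> torsion G M"
abbreviation "proj_K \<equiv> coprime_proj G 9 M"
abbreviation "proj_H \<equiv> coprime_proj G M 9"

lemma card_K: "card K = 9"
  using split.card_torsion_prime_powers[of 3 p 2 e] prime_p by simp

lemma card_H: "card H = M"
  using split.swap.card_torsion_prime_powers[of p 3 e 2] prime_p by simp

lemma finite_K: "finite K" and finite_H: "finite H"
  using finite_carrier torsion_subset finite_subset by blast+

lemma multiplier_coprime:
  assumes "coprime t (order G)" "x \<in> carrier G"
  shows "x \<in> D \<longleftrightarrow> x [^] t \<in> D"
proof (rule multiplier)
  show "(3 * u - 1) + (- 3 * u - 4) = lam - mu" "(3 * u - 1) * (- 3 * u - 4) = mu - k"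
    unfolding lam_eq mu_eq k_eq by (simp_all add: algebra_simps power2_eq_square)
  have "int (order G) = ((3 * u - 1) - (- 3 * u - 4)) ^ 2"
    using order_eq v_eq by (simp add: algebra_simps power2_eq_square)
  moreover have "coprime (int t) (int (order G))"
    using assms(1) by simp
  ultimately show "coprime (int t) ((3 * u - 1) - (- 3 * u - 4))"
    by (simp add: coprime_power_right_iff)
qed (use assms in auto)

text \<open>For \<open>g \<in> H\<close>, \<open>Kcoset_count g = |D \<inter> gK|\<close>; for \<open>h \<in> K\<close>, \<open>Hcoset_count h = |D \<inter> hH|\<close>.\<close>
definition Kcoset_count :: "'a \<Rightarrow> nat" where
  "Kcoset_count g = card {a\<in>D. proj_H a = g}"

definition Hcoset_count :: "'a \<Rightarrow> nat" where
  "Hcoset_count h = card {a\<in>D. proj_K a = h}"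

lemma Kcoset_count_one: "Kcoset_count \<one> = card (D \<inter> K)"
proof -
  have "{a\<in>D. proj_H a = \<one>} = D \<inter> K"
    using split.swap.coprime_proj_eq_one_iff D_subset by auto
  then show ?thesis
    by (simp add: Kcoset_count_def)
qed

lemma Hcoset_count_one: "Hcoset_count \<one> = card (D \<inter> H)"
proof -
  have "{a\<in>D. proj_K a = \<one>} = D \<inter> H"
    using split.coprime_proj_eq_one_iff D_subset by auto
  then show ?thesis
    by (simp add: Hcoset_count_def)
qed

lemma sum_Kcoset_count: "(\<Sum>g\<in>H. Kcoset_count g) = card D"
  using fiber_moments(1)[OF finite_H split.swap.coprime_proj_torsion split.swap.coprime_proj_eq_iff]
  by (simp add: Kcoset_count_def)

lemma sum_Kcoset_count_sq:
  "(\<Sum>g\<in>H. int (Kcoset_count g) ^ 2) = k + lam * int (Kcoset_count \<one>) + mu * (8 - int (Kcoset_count \<one>))"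
proof -
  have "(\<Sum>g\<in>H. Kcoset_count g ^ 2) = card (quotient_pairs K)"
    using fiber_moments(2)[OF finite_H split.swap.coprime_proj_torsion split.swap.coprime_proj_eq_iff]
    by (simp add: Kcoset_count_def)
  then have "(\<Sum>g\<in>H. int (Kcoset_count g) ^ 2) = int (card (quotient_pairs K))"
    by (simp flip: of_nat_power of_nat_sum)
  then show ?thesis
    using card_quotient_pairs_regular[OF torsion_subset one_torsion] card_K Kcoset_count_one by simp
qed

lemma sum_Hcoset_count: "(\<Sum>h\<in>K. Hcoset_count h) = card D"
  using fiber_moments(1)[OF finite_K split.coprime_proj_torsion split.coprime_proj_eq_iff]
  by (simp add: Hcoset_count_def)

lemma sum_Hcoset_count_sq:
  "(\<Sum>h\<in>K. int (Hcoset_count h) ^ 2) = k + lam * int (Hcoset_count \<one>) + mu * (int M - 1 - int (Hcoset_count \<one>))"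
proof -
  have "(\<Sum>h\<in>K. Hcoset_count h ^ 2) = card (quotient_pairs H)"
    using fiber_moments(2)[OF finite_K split.coprime_proj_torsion split.coprime_proj_eq_iff]
    by (simp add: Hcoset_count_def)
  then have "(\<Sum>h\<in>K. int (Hcoset_count h) ^ 2) = int (card (quotient_pairs H))"
    by (simp flip: of_nat_power of_nat_sum)
  then show ?thesis
    using card_quotient_pairs_regular[OF torsion_subset one_torsion] card_H Hcoset_count_one by simp
qed

lemma Kcoset_count_le_9: "Kcoset_count g \<le> 9"
proof -
  have "{a\<in>D. proj_H a = g} \<subseteq> (\<lambda>h. h \<otimes> g) ` K"
  proof
    fix a assume a: "a \<in> {a\<in>D. proj_H a = g}"
    then have "a \<in> carrier G"
      using D_subset by auto
    then have "a = proj_K a \<otimes> g" "proj_K a \<in> K"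
      using split.coprime_proj_decomp split.coprime_proj_torsion a by auto
    then show "a \<in> (\<lambda>h. h \<otimes> g) ` K"
      by blast
  qed
  then have "Kcoset_count g \<le> card ((\<lambda>h. h \<otimes> g) ` K)"
    unfolding Kcoset_count_def by (intro card_mono finite_imageI finite_K)
  also have "\<dots> \<le> 9"
    using card_image_le[OF finite_K] card_K by simp
  finally show ?thesis .
qed

lemma cube_fiber_mod_3:
  assumes y: "y \<in> carrier G"
  shows "[int (card {a\<in>D. a [^] (3::nat) = y}) = 2 * of_bool (y = \<one>)] (mod 3)"
proof -
  have "power_coeffs \<alpha> \<beta> \<gamma> c 3 = (\<alpha> * \<beta>, \<alpha> + \<beta> * \<beta>, \<gamma> * \<beta> + c * \<gamma>)" for \<alpha> \<beta> \<gamma> c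
    by (simp add: numeral_3_eq_3)
  then have "[int (card {a\<in>D. a [^] (3::nat) = y}) = (k - mu) * (lam - mu) * of_bool (y = \<one>)
      + ((k - mu) + (lam - mu) * (lam - mu)) * of_bool (y \<in> D) + (mu * (lam - mu) + k * mu)] (mod 3)"
    using pow_fiber_cong[of 3 _ _ _ y] y by simp
  moreover have coeffs: "(k - mu) * (lam - mu) = 2 + 3 * (- 15 * u ^ 2 - 15 * u + 6)"
    "(k - mu) + (lam - mu) * (lam - mu) = 3 * (3 * u ^ 2 + 3 * u + 7)"
    "mu * (lam - mu) + k * mu = 3 * (u * (3 * u - 1) * (k - 5))"
    unfolding k_eq lam_eq mu_eq by (simp_all add: algebra_simps power2_eq_square)
  have "[(k - mu) * (lam - mu) * d + ((k - mu) + (lam - mu) * (lam - mu)) * e + (mu * (lam - mu) + k * mu)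
      = 2 * d] (mod 3)" for d e
    unfolding coeffs cong_iff_dvd_diff by (simp add: algebra_simps)
  ultimately show ?thesis
    using cong_trans by blast
qed

lemma Kcoset_count_mod_3:
  assumes g: "g \<in> H"
  shows "[int (Kcoset_count g) = 2 * of_bool (g = \<one>)] (mod 3)"
proof -
  have gc: "g \<in> carrier G"
    using g torsion_subset by blast
  have cube_eq: "x [^] (3::nat) = g [^] (3::nat) \<longleftrightarrow> x = g" if "x \<in> H" for x
    using torsion_pow_inj[OF that g coprime_3_M] by auto
  define Y where "Y = {y\<in>carrier G. proj_H y = g [^] (3::nat)}"
  have finY: "finite Y"
    using finite_carrier by (simp add: Y_def)
  have "{a\<in>D. proj_H a = g} = (\<Union>y\<in>Y. {a\<in>D. a [^] (3::nat) = y})"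
  proof (rule equalityI; rule subsetI)
    fix a assume "a \<in> {a\<in>D. proj_H a = g}"
    then show "a \<in> (\<Union>y\<in>Y. {a\<in>D. a [^] (3::nat) = y})"
      using D_subset split.swap.coprime_proj_pow by (auto simp: Y_def)
  next
    fix a assume "a \<in> (\<Union>y\<in>Y. {a\<in>D. a [^] (3::nat) = y})"
    then have "a \<in> D" "proj_H a [^] (3::nat) = g [^] (3::nat)"
      using D_subset split.swap.coprime_proj_pow by (auto simp: Y_def)
    then show "a \<in> {a\<in>D. proj_H a = g}"
      using cube_eq split.swap.coprime_proj_torsion D_subset by auto
  qed
  moreover have "card (\<Union>y\<in>Y. {a\<in>D. a [^] (3::nat) = y}) = (\<Sum>y\<in>Y. card {a\<in>D. a [^] (3::nat) = y})"
    using finY finite_D by (intro card_UN_disjoint) auto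
  ultimately have "int (Kcoset_count g) = (\<Sum>y\<in>Y. int (card {a\<in>D. a [^] (3::nat) = y}))"
    unfolding Kcoset_count_def by simp
  also have "[\<dots> = (\<Sum>y\<in>Y. 2 * of_bool (y = \<one>))] (mod 3)"
    by (rule cong_sum) (use cube_fiber_mod_3 in \<open>auto simp: Y_def\<close>)
  also have "(\<Sum>y\<in>Y. 2 * of_bool (y = \<one>)) = (2 * of_bool (\<one> \<in> Y) :: int)"
    using finY by (simp add: sum_distrib_left[symmetric] of_bool_def sum.delta del: sum_of_bool_eq)
  also have "\<one> \<in> Y \<longleftrightarrow> g = \<one>"
    using cube_eq[of \<one>] split.swap.coprime_proj_torsion_id[of \<one>] by (auto simp: Y_def)
  finally show ?thesis .
qed

lemma Kcoset_count_pow: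
  assumes t: "coprime t (order G)" and g: "g \<in> H"
  shows "Kcoset_count (g [^] t) = Kcoset_count g"
proof -
  have inj: "x = y" if "x \<in> carrier G" "y \<in> carrier G" "x [^] t = y [^] t" for x y
    using pow_coprime_inj[OF finite_carrier t] that .
  have image: "(\<lambda>a. a [^] t) ` {a\<in>D. proj_H a = g} = {a\<in>D. proj_H a = g [^] t}"
  proof (rule equalityI; rule subsetI)
    fix b assume "b \<in> (\<lambda>a. a [^] t) ` {a\<in>D. proj_H a = g}"
    then show "b \<in> {a\<in>D. proj_H a = g [^] t}"
      using multiplier_coprime[OF t] split.swap.coprime_proj_pow D_subset by auto
  next
    fix b assume b: "b \<in> {a\<in>D. proj_H a = g [^] t}"
    then obtain a where a: "a \<in> carrier G" "b = a [^] t"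
      using pow_coprime_bij[OF finite_carrier t] D_subset by (auto simp: bij_betw_def)
    then have "a \<in> D" "proj_H a [^] t = g [^] t"
      using b multiplier_coprime[OF t] split.swap.coprime_proj_pow by auto
    then have "a \<in> {a\<in>D. proj_H a = g}"
      using inj[of "proj_H a" g] g a(1) torsion_subset by auto
    then show "b \<in> (\<lambda>a. a [^] t) ` {a\<in>D. proj_H a = g}"
      using a(2) by blast
  qed
  have "inj_on (\<lambda>a. a [^] t) {a\<in>D. proj_H a = g}"
    using inj D_subset by (auto intro: inj_onI)
  then show ?thesis
    unfolding Kcoset_count_def using card_image image by fastforce
qed

lemma Kcoset_count_inv:
  assumes g: "g \<in> H"
  shows "Kcoset_count (inv g) = Kcoset_count g"
proof -
  have image: "(\<lambda>a. inv a) ` {a\<in>D. proj_H a = g} = {a\<in>D. proj_H a = inv g}"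
  proof (rule equalityI; rule subsetI)
    fix b assume "b \<in> (\<lambda>a. inv a) ` {a\<in>D. proj_H a = g}"
    then show "b \<in> {a\<in>D. proj_H a = inv g}"
      using inv_mem_D split.swap.coprime_proj_inv D_subset by auto
  next
    fix b assume b: "b \<in> {a\<in>D. proj_H a = inv g}"
    have "g \<in> carrier G" "b \<in> carrier G"
      using g b torsion_subset D_subset by auto
    then have "inv b \<in> {a\<in>D. proj_H a = g}"
      using b inv_mem_D split.swap.coprime_proj_inv by auto
    moreover have "b = inv (inv b)"
      using b D_subset by auto
    ultimately show "b \<in> (\<lambda>a. inv a) ` {a\<in>D. proj_H a = g}"
      by blast
  qed
  have "inj_on (\<lambda>a. inv a) {a\<in>D. proj_H a = g}"
    using D_subset inv_inj by (auto intro: inj_on_subset)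
  then show ?thesis
    unfolding Kcoset_count_def using card_image image by fastforce
qed

lemma inverting_exponent_cong:
  "\<exists>t. coprime t (order G) \<and> [t * t = 1] (mod order G) \<and> [t = 8] (mod 9) \<and> [t = 1] (mod M)"
proof -
  obtain t where t9: "[t = 8] (mod 9)" and tM: "[t = 1] (mod M)"
    using binary_chinese_remainder_nat[OF coprime_9_M] by blast
  have "coprime (8::nat) 9"
    using coprime_Suc_right_nat[of 8] by simp
  then have "coprime t 9"
    using cong_imp_coprime[OF cong_sym[OF t9]] by blast
  moreover have "coprime t M"
    using cong_imp_coprime[OF cong_sym[OF tM]] by simp
  moreover have "[t * t = 8 * 8] (mod 9)" "[t * t = 1 * 1] (mod M)"
    using cong_mult t9 tM by blast+
  then have "[t * t = 1] (mod 9)" "[t * t = 1] (mod M)"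
    by (simp_all add: cong_def)
  then have "[t * t = 1] (mod order G)"
    using coprime_cong_mult_nat coprime_9_M order_G by simp
  ultimately show ?thesis
    using t9 tM by (auto simp: order_G)
qed

lemma inverting_exponent:
  "\<exists>t. coprime t (order G) \<and> [t * t = 1] (mod order G)
     \<and> (\<forall>a\<in>carrier G. a [^] t = inv (proj_K a) \<otimes> proj_H a)"
proof -
  obtain t where t: "coprime t (order G)" "[t * t = 1] (mod order G)"
    and t9: "[t = 8] (mod 9)" and tM: "[t = 1] (mod M)"
    using inverting_exponent_cong by blast
  have t_K: "h [^] t = inv h" if "h \<in> K" for h
  proof -
    have hc: "h \<in> carrier G" and h9: "h [^] (9::nat) = \<one>"
      using that by (auto simp: torsion_def)
    then have "h [^] t \<otimes> h = \<one>"
      using pow_cong[OF hc h9 t9] by (simp add: nat_pow_Suc[symmetric] del: nat_pow_Suc)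
    then show ?thesis
      using hc by (simp add: inv_equality)
  qed
  have t_H: "x [^] t = x" if "x \<in> H" for x
    using that pow_cong[OF _ _ tM] by (simp add: torsion_def)
  have "a [^] t = inv (proj_K a) \<otimes> proj_H a" if a: "a \<in> carrier G" for a
  proof -
    have "a [^] t = proj_K a [^] t \<otimes> proj_H a [^] t"
      using split.coprime_proj_decomp[OF a] nat_pow_distrib[of "proj_K a" "proj_H a" t] a by simp
    then show ?thesis
      using t_K t_H split.coprime_proj_torsion split.swap.coprime_proj_torsion a by simp
  qed
  then show ?thesis
    using t by blast
qed

lemma inverting_exponent_fixed_iff:
  assumes t: "\<forall>a\<in>carrier G. a [^] t = inv (proj_K a) \<otimes> proj_H a" and a: "a \<in> carrier G"
  shows "a [^] t = a \<longleftrightarrow> a \<in> H"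
proof -
  have h: "proj_K a \<in> K" "proj_K a \<in> carrier G" "proj_H a \<in> carrier G"
    using split.coprime_proj_torsion split.coprime_proj_closed split.swap.coprime_proj_closed a by blast+
  have "a [^] t = a \<longleftrightarrow> inv (proj_K a) \<otimes> proj_H a = proj_K a \<otimes> proj_H a"
    using t split.coprime_proj_decomp[OF a] a by simp
  also have "\<dots> \<longleftrightarrow> inv (proj_K a) = proj_K a"
    using h by (simp add: r_cancel)
  also have "\<dots> \<longleftrightarrow> proj_K a = \<one>"
    using torsion_odd_inv_eq_self[OF h(1)] by auto
  also have "\<dots> \<longleftrightarrow> a \<in> H"
    using split.coprime_proj_eq_one_iff[OF a] .
  finally show ?thesis .
qed

text \<open>The exponent of \<open>inverting_exponent\<close> maps \<open>D \<inter> gK\<close> to itself by the multiplier theorem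
  and acts on it as an involution whose only possible fixed point is \<open>g\<close>.\<close>
lemma Kcoset_count_parity:
  assumes g: "g \<in> H"
  shows "even (Kcoset_count g + of_bool (g \<in> D))"
proof -
  obtain t where t: "coprime t (order G)" and tt: "[t * t = 1] (mod order G)"
    and pow_t: "\<forall>a\<in>carrier G. a [^] t = inv (proj_K a) \<otimes> proj_H a"
    using inverting_exponent by blast
  define A where "A = {a\<in>D. proj_H a = g}"
  have A: "a \<in> D" "a \<in> carrier G" "proj_H a = g" if "a \<in> A" for a
    using that D_subset by (auto simp: A_def)
  have g_t: "g [^] t = g"
    using inverting_exponent_fixed_iff[OF pow_t] g torsion_subset by blast
  have "even (card A + card {a\<in>A. a [^] t = a})"
  proof (rule even_card_plus_card_fixpoints)
    show "finite A"
      using finite_D by (simp add: A_def)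
    fix a assume a: "a \<in> A"
    have "a [^] t \<in> D" "proj_H (a [^] t) = g"
      using multiplier_coprime[OF t A(2)[OF a]] A[OF a] split.swap.coprime_proj_pow g_t by auto
    then show "a [^] t \<in> A"
      by (simp add: A_def)
    show "(a [^] t) [^] t = a"
      using pow_order_cong[OF finite_carrier A(2)[OF a] tt] A(2)[OF a] by (simp add: nat_pow_pow)
  qed
  moreover have "{a\<in>A. a [^] t = a} = A \<inter> {g}"
  proof -
    have "a \<in> H \<longleftrightarrow> a = g" if "a \<in> A" for a
      using A[OF that] split.swap.coprime_proj_torsion_id g by auto
    then show ?thesis
      using inverting_exponent_fixed_iff[OF pow_t] A(2) by auto
  qed
  moreover have "g \<in> A \<longleftrightarrow> g \<in> D"
    using split.swap.coprime_proj_torsion_id[OF g] by (simp add: A_def)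
  ultimately show ?thesis
    by (simp add: Kcoset_count_def A_def Int_insert_right)
qed

lemma Kcoset_count_nontrivial:
  assumes "g \<in> H - {\<one>}"
  shows "Kcoset_count g \<in> {0, 3, 6, 9}"
proof -
  have "[Kcoset_count g = 0] (mod 3)"
    using Kcoset_count_mod_3[of g] assms by (simp flip: cong_int_iff)
  then have "3 dvd Kcoset_count g"
    by (simp add: cong_0_iff)
  then show ?thesis
    using Kcoset_count_le_9[of g] by (auto elim!: dvdE)
qed

lemma card_D_inter_K: "card (D \<inter> K) = 2 \<or> card (D \<inter> K) = 8"
proof -
  have "card (D \<inter> K) \<le> card (K - {\<one>})"
    using one_notin_D finite_K by (intro card_mono) auto
  then have "card (D \<inter> K) \<le> 8"
    using card_K finite_K by simp
  moreover have "even (card (D \<inter> K))"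
    using Kcoset_count_parity[of \<one>] one_notin_D Kcoset_count_one by simp
  moreover have "[card (D \<inter> K) = 2] (mod 3)"
    using Kcoset_count_mod_3[of \<one>] Kcoset_count_one by (simp flip: cong_int_iff)
  ultimately show ?thesis
    by (auto simp: cong_def) presburger
qed

lemma sum_nontrivial_Kcoset_count:
  "(\<Sum>g\<in>H - {\<one>}. int (Kcoset_count g)) = k - int (card (D \<inter> K))"
  and sum_nontrivial_Kcoset_count_sq:
  "(\<Sum>g\<in>H - {\<one>}. int (Kcoset_count g) ^ 2)
     = k + lam * int (card (D \<inter> K)) + mu * (8 - int (card (D \<inter> K))) - int (card (D \<inter> K)) ^ 2"
proof -
  have "(\<Sum>g\<in>H. int (Kcoset_count g)) = int (Kcoset_count \<one>) + (\<Sum>g\<in>H - {\<one>}. int (Kcoset_count g))"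
    "(\<Sum>g\<in>H. int (Kcoset_count g) ^ 2) = int (Kcoset_count \<one>) ^ 2 + (\<Sum>g\<in>H - {\<one>}. int (Kcoset_count g) ^ 2)"
    by (simp_all add: sum.remove[OF finite_H one_torsion])
  moreover have "(\<Sum>g\<in>H. int (Kcoset_count g)) = k"
    using sum_Kcoset_count card_D by (simp flip: of_nat_sum)
  ultimately show "(\<Sum>g\<in>H - {\<one>}. int (Kcoset_count g)) = k - int (card (D \<inter> K))"
    "(\<Sum>g\<in>H - {\<one>}. int (Kcoset_count g) ^ 2)
     = k + lam * int (card (D \<inter> K)) + mu * (8 - int (card (D \<inter> K))) - int (card (D \<inter> K)) ^ 2"
    using sum_Kcoset_count_sq Kcoset_count_one by simp_all
qed

definition extreme_cosets :: "'a set" where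
  "extreme_cosets = {g\<in>H - {\<one>}. Kcoset_count g \<in> {0, 9}}"

lemma card_extreme_cosets:
  "18 * int (card extreme_cosets) = 32 + 4 * int (card (D \<inter> K)) - int (card (D \<inter> K)) ^ 2"
proof -
  have "(\<Sum>g\<in>H - {\<one>}. (int (Kcoset_count g) - 3) * (int (Kcoset_count g) - 6))
      = (\<Sum>g\<in>H - {\<one>}. 18 * of_bool (g \<in> extreme_cosets))"
  proof (rule sum.cong[OF refl])
    fix g assume g: "g \<in> H - {\<one>}"
    then have "Kcoset_count g \<in> {0, 3, 6, 9}"
      by (rule Kcoset_count_nontrivial)
    then show "(int (Kcoset_count g) - 3) * (int (Kcoset_count g) - 6) = 18 * of_bool (g \<in> extreme_cosets)"
      using g by (auto simp: extreme_cosets_def)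
  qed
  also have "\<dots> = 18 * int (card extreme_cosets)"
  proof -
    have "(H - {\<one>}) \<inter> {g. g \<in> extreme_cosets} = extreme_cosets"
      by (auto simp: extreme_cosets_def)
    then show ?thesis
      using finite_H by (simp add: sum_distrib_left[symmetric])
  qed
  finally have "18 * int (card extreme_cosets)
      = (\<Sum>g\<in>H - {\<one>}. int (Kcoset_count g) ^ 2) - 9 * (\<Sum>g\<in>H - {\<one>}. int (Kcoset_count g)) + 18 * int (card (H - {\<one>}))"
    by (simp add: algebra_simps power2_eq_square sum.distrib sum_subtractf sum_distrib_left)
  also have "int (card (H - {\<one>})) = (2 * u + 1) ^ 2 - 1"
    using card_H finite_H M_gt_1 p_power_eq by (simp add: of_nat_diff)
  finally show ?thesis
    unfolding sum_nontrivial_Kcoset_count sum_nontrivial_Kcoset_count_sq k_eq lam_eq mu_eq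
    by (simp add: algebra_simps power2_eq_square)
qed

lemma card_extreme_cosets_ge_3:
  assumes "extreme_cosets \<noteq> {}"
  shows "3 \<le> card extreme_cosets"
proof -
  obtain g where g: "g \<in> H" "g \<noteq> \<one>" "Kcoset_count g \<in> {0, 9}"
    using assms by (auto simp: extreme_cosets_def)
  have gc: "g \<in> carrier G"
    using g torsion_subset by blast
  have pow_ne_one: "g [^] j \<noteq> \<one>" if "coprime j M" for j
    using torsion_pow_inj[OF g(1) one_torsion that] g(2) by auto
  have "coprime (2::nat) (order G)"
    using odd_M by (simp add: order_G)
  then have "g [^] (2::nat) \<in> extreme_cosets"
    using g Kcoset_count_pow torsion_pow_closed pow_ne_one odd_M by (auto simp: extreme_cosets_def)
  moreover have "inv g \<in> extreme_cosets"
    using g gc Kcoset_count_inv torsion_div_closed[OF one_torsion g(1)] by (auto simp: extreme_cosets_def)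
  moreover have "g [^] (2::nat) \<noteq> g" "inv g \<noteq> g" "g [^] (2::nat) \<noteq> inv g"
  proof -
    have "g [^] (2::nat) = g \<otimes> g" "g [^] (3::nat) = g [^] (2::nat) \<otimes> g"
      using gc by (simp_all add: numeral_2_eq_2 numeral_3_eq_3 nat_pow_Suc2 del: nat_pow_Suc)
    then show "g [^] (2::nat) \<noteq> g" "inv g \<noteq> g" "g [^] (2::nat) \<noteq> inv g"
      using gc g(2) pow_ne_one[of 2] pow_ne_one[of 3] odd_M coprime_3_M
      by (auto simp: r_cancel_one') (metis r_inv)+
  qed
  moreover have "g \<in> extreme_cosets"
    using g by (simp add: extreme_cosets_def)
  moreover have "finite extreme_cosets"
    using finite_H by (simp add: extreme_cosets_def)
  ultimately have "card {g, g [^] (2::nat), inv g} \<le> card extreme_cosets"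
    by (intro card_mono) auto
  moreover have "card {g, g [^] (2::nat), inv g} = 3"
    using \<open>g [^] (2::nat) \<noteq> g\<close> \<open>inv g \<noteq> g\<close> \<open>g [^] (2::nat) \<noteq> inv g\<close> by auto
  ultimately show ?thesis
    by simp
qed

lemma card_D_inter_K_eq_8: "card (D \<inter> K) = 8"
proof (rule ccontr)
  assume "card (D \<inter> K) \<noteq> 8"
  then have "card (D \<inter> K) = 2"
    using card_D_inter_K by blast
  then have "card extreme_cosets = 2"
    using card_extreme_cosets by simp
  then show False
    using card_extreme_cosets_ge_3 by fastforce
qed

lemma Kcoset_count_nontrivial_eq:
  assumes g: "g \<in> H - {\<one>}"
  shows "Kcoset_count g = (if g \<in> D then 3 else 6)"
proof -
  have "card extreme_cosets = 0"
    using card_extreme_cosets card_D_inter_K_eq_8 by simp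
  then have "g \<notin> extreme_cosets"
    using finite_H by (simp add: extreme_cosets_def)
  then have "Kcoset_count g \<in> {3, 6}"
    using Kcoset_count_nontrivial[OF g] g by (auto simp: extreme_cosets_def)
  then show ?thesis
    using Kcoset_count_parity[of g] g by auto
qed

lemma card_D_inter_H: "int (card (D \<inter> H)) = 2 * (u + 1) * (u + 2)"
proof -
  have DH: "D \<inter> (H - {\<one>}) = D \<inter> H"
    using one_notin_D by auto
  have "k - 8 = (\<Sum>g\<in>H - {\<one>}. int (Kcoset_count g))"
    using sum_nontrivial_Kcoset_count card_D_inter_K_eq_8 by simp
  also have "\<dots> = (\<Sum>g\<in>H - {\<one>}. if g \<in> D then 3 else 6)"
    using Kcoset_count_nontrivial_eq by (intro sum.cong) auto
  also have "\<dots> = 3 * int (card (D \<inter> H)) + 6 * int (card (H - {\<one>} - D))"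
    using finite_H DH by (simp add: sum.If_cases Int_commute Diff_eq)
  also have "int (card (H - {\<one>} - D)) = int M - 1 - int (card (D \<inter> H))"
  proof -
    have "H - {\<one>} - D = (H - {\<one>}) - (D \<inter> H)" "D \<inter> H \<subseteq> H - {\<one>}"
      using one_notin_D by auto
    moreover have "card (D \<inter> H) \<le> card (H - {\<one>})"
      using finite_H one_notin_D by (intro card_mono) auto
    ultimately show ?thesis
      using finite_H card_H M_gt_1 by (simp add: card_Diff_subset of_nat_diff finite_subset)
  qed
  finally show ?thesis
    unfolding k_eq using p_power_eq by (simp add: algebra_simps power2_eq_square)
qed

theorem inconsistent: False
proof -
  define b where "b = int (Hcoset_count \<one>)"
  have b: "b = 2 * (u + 1) * (u + 2)"
    using card_D_inter_H Hcoset_count_one by (simp add: b_def)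
  have "(\<Sum>h\<in>K. int (Hcoset_count h)) = b + (\<Sum>h\<in>K - {\<one>}. int (Hcoset_count h))"
    "(\<Sum>h\<in>K. int (Hcoset_count h) ^ 2) = b ^ 2 + (\<Sum>h\<in>K - {\<one>}. int (Hcoset_count h) ^ 2)"
    by (simp_all add: sum.remove[OF finite_K one_torsion] b_def)
  moreover have "(\<Sum>h\<in>K. int (Hcoset_count h)) = k"
    using sum_Hcoset_count card_D by (simp flip: of_nat_sum)
  ultimately have sum1: "(\<Sum>h\<in>K - {\<one>}. int (Hcoset_count h)) = k - b"
    and sum2: "(\<Sum>h\<in>K - {\<one>}. int (Hcoset_count h) ^ 2) = k + lam * b + mu * (int M - 1 - b) - b ^ 2"
    using sum_Hcoset_count_sq by (simp_all add: b_def)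
  have "(k - b) ^ 2 \<le> 8 * (k + lam * b + mu * (int M - 1 - b) - b ^ 2)"
    using square_sum_le_card_sum_squares[of "\<lambda>h. int (Hcoset_count h)" "K - {\<one>}"] sum1 sum2 card_K finite_K
    by simp
  moreover have "8 * (k + lam * b + mu * (int M - 1 - b) - b ^ 2) - (k - b) ^ 2 = - 192 * ((u + 1) * (u + 2))"
    unfolding b k_eq lam_eq mu_eq p_power_eq by (simp add: algebra_simps power2_eq_square)
  moreover have "(u + 1) * (u + 2) > 0"
    using u_nonneg by simp
  ultimately show False
    by simp
qed

end

lemma no_pds_9M:
  assumes "comm_group G" "finite (carrier G)" "Factorial_Ring.prime p" "p \<ge> 5" "e > 0"
    and "u \<ge> 0" "int (p ^ e) = (2 * u + 1) ^ 2"
  shows "\<not> is_pds G D (9 * (2 * u + 1) ^ 2) ((3 * u - 1) * (3 * (2 * u + 1) + 1))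
           (- 3 * (2 * u + 1) + (3 * u - 1) ^ 2 + 3 * (3 * u - 1)) ((3 * u - 1) ^ 2 + (3 * u - 1))"
proof
  assume D: "is_pds G D (9 * (2 * u + 1) ^ 2) ((3 * u - 1) * (3 * (2 * u + 1) + 1))
           (- 3 * (2 * u + 1) + (3 * u - 1) ^ 2 + 3 * (3 * u - 1)) ((3 * u - 1) ^ 2 + (3 * u - 1))"
  interpret pds_9M G D "9 * (2 * u + 1) ^ 2" "(3 * u - 1) * (3 * (2 * u + 1) + 1)"
      "- 3 * (2 * u + 1) + (3 * u - 1) ^ 2 + 3 * (3 * u - 1)" "(3 * u - 1) ^ 2 + (3 * u - 1)" u p e
    by (intro pds_9M.intro pds.intro pds_axioms.intro pds_9M_axioms.intro assms D refl)
  show False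
    by (rule inconsistent)
qed

theorem theorem6:
  fixes G (structure) and p s :: nat
  assumes "comm_group G" and "finite (carrier G)"
    and "card (carrier G) = 9 * p ^ (4 * s)"
    and "Factorial_Ring.prime p" and "p \<ge> 5" and "s > 0"
  shows "let r = (3 * int p ^ (2 * s) - 5) div 2 in
         \<not> (\<exists>D. is_pds G D (9 * int p ^ (4 * s)) (r * (3 * int p ^ (2 * s) + 1))
                  (- 3 * int p ^ (2 * s) + r ^ 2 + 3 * r) (r ^ 2 + r))"
proof -
  define u where "u = int p ^ (2 * s) div 2"
  have N: "int p ^ (2 * s) = 2 * u + 1"
    using prime_odd_nat[OF assms(4)] assms(5) by (simp add: u_def odd_two_times_div_two_succ)
  have "int p ^ (4 * s) = (int p ^ (2 * s)) ^ 2"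
    by (simp flip: power_mult add: mult.commute)
  then have v: "int p ^ (4 * s) = (2 * u + 1) ^ 2"
    unfolding N .
  have r: "(3 * int p ^ (2 * s) - 5) div 2 = 3 * u - 1"
    unfolding N by simp
  have "u \<ge> 0"
    by (simp add: u_def)
  then show ?thesis
    unfolding Let_def r v N using no_pds_9M[of G p "4 * s" u] assms v by simp
qed

end
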